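(* Let $n\equiv 3\pmod 4$ with $n>3$. Let $1\le r\le m$, let $M_r\in\mathfrak{C}_r$, and suppose $\det\tilde M_r>0$. Let $E_m^*\in\mathfrak{E}_m$ satisfy $\det E_m^*=\max\{\det E: E\in\mathfrak{E}_m\}$, and write $$E_m^*=\begin{bmatrix}M_r & B\\ B^T & A\end{bmatrix}$$ with $A=(a_{ij})$ of order $m-r$ and $B$ of size $r\times(m-r)$. If $a_{ij}=3$ for some $i\neq j$, then columns $i$ and $j$ of $B$ are equal, and columns $i$ and $j$ of $A$ are equal except for their $i$-th and $j$-th entries.
   Context: Fix an integer $n\equiv 3\pmod 4$, $n>3$. For $m\ge1$, $\mathfrak{C}_m$ is the set of symmetric positive definite $m\times m$ integer matrices $C=(c_{ij})$ with $c_{ii}=n$ and $c_{ij}\equiv n\pmod 4$ for all $i,j$. Given a fixed $M_r\in\mathfrak{C}_r$, for $m\ge r$, $\mathfrak{E}_m$ is the set of $E_m\in\mathfrak{C}_m$ whose leading $r\times r$ submatrix is $M_r$. For a square matrix $C$ of order $m$, $\tilde C$ denotes the matrix obtained from $C$ by replacing its $(m,m)$ entry by $3$. *)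

theory Defs
  imports "Jordan_Normal_Form.Determinant"
begin

definition pos_def_int :: "nat \<Rightarrow> int mat \<Rightarrow> bool" where
  "pos_def_int m C \<longleftrightarrow> C \<in> carrier_mat m m \<and> C\<^sup>T = C \<and>
     (\<forall>x :: real vec. x \<in> carrier_vec m \<and> x \<noteq> 0\<^sub>v m \<longrightarrow>
        scalar_prod x (map_mat real_of_int C *\<^sub>v x) > 0)"

definition frakC :: "int \<Rightarrow> nat \<Rightarrow> int mat set" where
  "frakC n m = {C. pos_def_int m C \<and> (\<forall>i<m. C $$ (i,i) = n) \<and>
                   (\<forall>i<m. \<forall>j<m. C $$ (i,j) mod 4 = n mod 4)}"

definition frakE :: "int \<Rightarrow> int mat \<Rightarrow> nat \<Rightarrow> int mat set" where
  "frakE n M m = {E \<in> frakC n m. \<forall>i<dim_row M. \<forall>j<dim_row M. E $$ (i,j) = M $$ (i,j)}"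

definition tilde :: "int mat \<Rightarrow> int mat" where
  "tilde C = mat (dim_row C) (dim_col C)
     (\<lambda>(i,j). if i = dim_row C - 1 \<and> j = dim_col C - 1 then 3 else C $$ (i,j))"

end

theory Submission
  imports Defs
begin

text \<open>
  After a simultaneous permutation fixing the first r indices, the two indices with entry 3 become
  the last two, and a maximizer has the shape E = [[G, u, w], [u^T, n, 3], [w^T, 3, n]].
  With a = u^T G^-1 u, b = w^T G^-1 w, c = u^T G^-1 w and the Schur complements p = n - a,
  q = n - b, one has det E = det G (p q - (3 - c)^2). Replacing w by u, or u by w, gives two
  competitors in the same class, and the sum of their determinants exceeds 2 det E by
  2 det G ((p - (n - 3)) (a + b - 2 c) + (c - a)^2). Here a + b - 2 c > 0 unless u = w, by positive
  definiteness of G, so maximality of E forces u = w as soon as p > n - 3.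

  That inequality says det E > (n - 3) det [[G, w], [w^T, n]], and it follows from the strict growth
  of the maximal determinant in t \<ge> r by the factor n - 3. Duplicating the last row and column
  of a maximizer, with 3 where the copies meet, realises this growth; det (tilde M) > 0 starts it,
  because det M - det (tilde M) is n - 3 times the leading principal minor of M.
\<close>

section \<open>Bordered matrices\<close>

definition vec_snoc :: "'a vec \<Rightarrow> 'a \<Rightarrow> 'a vec" where
  "vec_snoc z \<tau> = vec (Suc (dim_vec z)) (\<lambda>a. if a < dim_vec z then z $ a else \<tau>)"

definition border_mat :: "'a mat \<Rightarrow> 'a vec \<Rightarrow> 'a \<Rightarrow> 'a mat" where
  "border_mat F x \<alpha> = mat (Suc (dim_row F)) (Suc (dim_row F)) (\<lambda>(a,b).
     if a < dim_row F \<and> b < dim_row F then F $$ (a,b) else if a < dim_row F then x $ a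
     else if b < dim_row F then x $ b else \<alpha>)"

definition leading_submat :: "'a mat \<Rightarrow> 'a mat" where
  "leading_submat A = mat (dim_row A - 1) (dim_row A - 1) (\<lambda>(a,b). A $$ (a,b))"

definition last_col :: "'a mat \<Rightarrow> 'a vec" where
  "last_col A = vec (dim_row A - 1) (\<lambda>a. A $$ (a, dim_row A - 1))"

lemma vec_snoc_carrier[simp]: "z \<in> carrier_vec t \<Longrightarrow> vec_snoc z \<tau> \<in> carrier_vec (Suc t)"
  and dim_vec_snoc[simp]: "dim_vec (vec_snoc z \<tau>) = Suc (dim_vec z)"
  by (auto simp: vec_snoc_def)

lemma vec_snoc_index: "a < Suc (dim_vec z) \<Longrightarrow> vec_snoc z \<tau> $ a = (if a < dim_vec z then z $ a else \<tau>)"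
  by (simp add: vec_snoc_def)

lemma vec_snoc_split: "x \<in> carrier_vec (Suc t) \<Longrightarrow> x = vec_snoc (vec t (\<lambda>a. x $ a)) (x $ t)"
  by (rule eq_vecI, auto simp: vec_snoc_def less_Suc_eq)

lemma vec_snoc_eq_zero_iff:
  assumes z: "z \<in> carrier_vec t"
  shows "vec_snoc z \<tau> = 0\<^sub>v (Suc t) \<longleftrightarrow> z = 0\<^sub>v t \<and> \<tau> = 0"
proof
  assume h: "vec_snoc z \<tau> = 0\<^sub>v (Suc t)"
  have "\<tau> = 0" using arg_cong[OF h, of "\<lambda>v. v $ t"] z by (simp add: vec_snoc_def)
  moreover have "z = 0\<^sub>v t"
  proof (rule eq_vecI)
    fix a assume "a < dim_vec (0\<^sub>v t :: 'a vec)"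
    thus "z $ a = 0\<^sub>v t $ a" using arg_cong[OF h, of "\<lambda>v. v $ a"] z by (simp add: vec_snoc_def)
  qed (use z in simp)
  ultimately show "z = 0\<^sub>v t \<and> \<tau> = 0" by simp
next
  assume "z = 0\<^sub>v t \<and> \<tau> = 0"
  thus "vec_snoc z \<tau> = 0\<^sub>v (Suc t)" by (intro eq_vecI, auto simp: vec_snoc_def)
qed

lemma scalar_prod_vec_snoc:
  fixes z w :: "'a::comm_ring_1 vec"
  assumes "z \<in> carrier_vec t" "w \<in> carrier_vec t"
  shows "vec_snoc z \<tau> \<bullet> vec_snoc w \<sigma> = z \<bullet> w + \<tau> * \<sigma>"
  using assms unfolding scalar_prod_def
  by (simp add: sum.atLeast0_lessThan_Suc vec_snoc_def)

lemma border_mat_carrier[simp]: "F \<in> carrier_mat t t \<Longrightarrow> border_mat F x \<alpha> \<in> carrier_mat (Suc t) (Suc t)"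
  by (auto simp: border_mat_def)

lemma dim_border_mat[simp]:
  "dim_row (border_mat F x \<alpha>) = Suc (dim_row F)" "dim_col (border_mat F x \<alpha>) = Suc (dim_row F)"
  by (auto simp: border_mat_def)

lemma border_mat_index:
  "a < Suc (dim_row F) \<Longrightarrow> b < Suc (dim_row F) \<Longrightarrow> border_mat F x \<alpha> $$ (a,b) =
    (if a < dim_row F \<and> b < dim_row F then F $$ (a,b) else if a < dim_row F then x $ a
     else if b < dim_row F then x $ b else \<alpha>)"
  by (simp add: border_mat_def)

lemma leading_submat_carrier[simp]:
  "A \<in> carrier_mat (Suc t) (Suc t) \<Longrightarrow> leading_submat A \<in> carrier_mat t t"
  by (auto simp: leading_submat_def)

lemma last_col_carrier[simp]: "A \<in> carrier_mat (Suc t) (Suc t) \<Longrightarrow> last_col A \<in> carrier_vec t"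
  by (auto simp: last_col_def)

lemma leading_submat_index:
  "A \<in> carrier_mat (Suc t) (Suc t) \<Longrightarrow> a < t \<Longrightarrow> b < t \<Longrightarrow> leading_submat A $$ (a,b) = A $$ (a,b)"
  by (auto simp: leading_submat_def)

lemma last_col_index: "A \<in> carrier_mat (Suc t) (Suc t) \<Longrightarrow> a < t \<Longrightarrow> last_col A $ a = A $$ (a,t)"
  by (auto simp: last_col_def)

lemma border_mat_leading_submat:
  assumes A: "A \<in> carrier_mat (Suc t) (Suc t)"
    and sym: "\<And>a b. a < Suc t \<Longrightarrow> b < Suc t \<Longrightarrow> A $$ (a,b) = A $$ (b,a)"
  shows "border_mat (leading_submat A) (last_col A) (A $$ (t,t)) = A"
  by (rule eq_matI, insert A sym, auto simp: border_mat_index leading_submat_def last_col_def less_Suc_eq)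

lemma leading_submat_border_mat[simp]: "F \<in> carrier_mat t t \<Longrightarrow> leading_submat (border_mat F x \<alpha>) = F"
  by (rule eq_matI, auto simp: leading_submat_def border_mat_index)

lemma last_col_border_mat[simp]:
  "F \<in> carrier_mat t t \<Longrightarrow> x \<in> carrier_vec t \<Longrightarrow> last_col (border_mat F x \<alpha>) = x"
  by (rule eq_vecI, auto simp: last_col_def border_mat_index)

lemma transpose_border_mat:
  assumes F: "F \<in> carrier_mat t t" and s: "F\<^sup>T = F"
  shows "(border_mat F x \<alpha>)\<^sup>T = border_mat F x \<alpha>"
proof (rule eq_matI)
  fix a b assume a: "a < dim_row (border_mat F x \<alpha>)" and b: "b < dim_col (border_mat F x \<alpha>)"
  have "F $$ (b,a) = F $$ (a,b)" if "a < t" "b < t"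
    using that F arg_cong[OF s, of "\<lambda>A. A $$ (a,b)"] by simp
  thus "(border_mat F x \<alpha>)\<^sup>T $$ (a, b) = border_mat F x \<alpha> $$ (a, b)"
    using a b F by (simp add: border_mat_index)
qed auto

lemma border_mat_mult_vec_snoc:
  fixes F :: "'a::comm_ring_1 mat"
  assumes F: "F \<in> carrier_mat t t" and x: "x \<in> carrier_vec t" and z: "z \<in> carrier_vec t"
  shows "border_mat F x \<alpha> *\<^sub>v vec_snoc z \<tau> = vec_snoc (F *\<^sub>v z + \<tau> \<cdot>\<^sub>v x) (x \<bullet> z + \<alpha> * \<tau>)"
proof (rule eq_vecI)
  fix a assume "a < dim_vec (vec_snoc (F *\<^sub>v z + \<tau> \<cdot>\<^sub>v x) (x \<bullet> z + \<alpha> * \<tau>))"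
  hence a: "a < Suc t" using F x by simp
  have "(border_mat F x \<alpha> *\<^sub>v vec_snoc z \<tau>) $ a =
      (\<Sum>c<t. border_mat F x \<alpha> $$ (a,c) * z $ c) + border_mat F x \<alpha> $$ (a,t) * \<tau>"
    using F z a by (simp add: scalar_prod_def row_def atLeast0LessThan vec_snoc_index)
  thus "(border_mat F x \<alpha> *\<^sub>v vec_snoc z \<tau>) $ a = vec_snoc (F *\<^sub>v z + \<tau> \<cdot>\<^sub>v x) (x \<bullet> z + \<alpha> * \<tau>) $ a"
    using F x z a
    by (cases "a < t") (simp_all add: border_mat_index vec_snoc_index scalar_prod_def row_def
        atLeast0LessThan mult.commute less_Suc_eq)
qed (use F x in simp)

lemma det_last_col_zero:
  fixes A :: "'a::comm_ring_1 mat"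
  assumes A: "A \<in> carrier_mat (Suc t) (Suc t)" and zero: "\<And>i. i < t \<Longrightarrow> A $$ (i,t) = 0"
  shows "det A = A $$ (t,t) * det (leading_submat A)"
proof -
  have "det A = (\<Sum>i<Suc t. A $$ (i,t) * cofactor A i t)"
    by (rule laplace_expansion_column[OF A], simp)
  also have "\<dots> = A $$ (t,t) * cofactor A t t" using zero by simp
  also have "mat_delete A t t = leading_submat A"
    by (rule eq_matI, insert A, auto simp: mat_delete_def leading_submat_def)
  hence "cofactor A t t = det (leading_submat A)" unfolding cofactor_def by simp
  finally show ?thesis .
qed

lemma det_border_mat:
  fixes F :: "'a::comm_ring_1 mat"
  assumes F: "F \<in> carrier_mat t t" and y: "y \<in> carrier_vec t" and x: "F *\<^sub>v y = x"
  shows "det (border_mat F x \<alpha>) = det F * (\<alpha> - x \<bullet> y)"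
proof -
  have xc: "x \<in> carrier_vec t" using x F y mult_mat_vec_carrier by blast
  \<comment> \<open>Subtracting the combination y of the first t columns from the last one clears the last
    column above the corner.\<close>
  define U :: "'a mat" where
    "U = mat (Suc t) (Suc t) (\<lambda>(a,b). if a = b then 1 else if b = t then - y $ a else 0)"
  have U: "U \<in> carrier_mat (Suc t) (Suc t)" unfolding U_def by auto
  have "diag_mat U = map (\<lambda>i. 1) [0..<Suc t]" unfolding diag_mat_def U_def
    by (intro map_cong, auto)
  hence "diag_mat U = replicate (Suc t) 1" by (simp add: map_replicate_const)
  hence detU: "det U = 1"
    using det_upper_triangular[OF _ U] by (simp add: U_def upper_triangular_def)
  define K where "K = border_mat F x \<alpha> * U"
  have K: "K \<in> carrier_mat (Suc t) (Suc t)" unfolding K_def by (rule mult_carrier_mat[OF border_mat_carrier[OF F] U])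
  have Kent: "K $$ (a,b) = (if b < t then border_mat F x \<alpha> $$ (a,b) else if a < t then 0 else \<alpha> - x \<bullet> y)"
    if a: "a < Suc t" and b: "b < Suc t" for a b
  proof -
    have "K $$ (a,b) = (\<Sum>c<t. border_mat F x \<alpha> $$ (a,c) * U $$ (c,b)) + border_mat F x \<alpha> $$ (a,t) * U $$ (t,b)"
      unfolding K_def using a b F U by (simp add: scalar_prod_def row_def col_def atLeast0LessThan)
    also have "\<dots> = (if b < t then border_mat F x \<alpha> $$ (a,b) else if a < t then 0 else \<alpha> - x \<bullet> y)"
    proof (cases "b < t")
      case True
      have "(\<Sum>c<t. border_mat F x \<alpha> $$ (a,c) * U $$ (c,b)) = (\<Sum>c<t. if c = b then border_mat F x \<alpha> $$ (a,c) else 0)"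
        by (rule sum.cong, insert True, auto simp: U_def)
      thus ?thesis using True by (simp add: U_def)
    next
      case False
      hence bt: "b = t" using b by simp
      have col: "(\<Sum>c<t. border_mat F x \<alpha> $$ (a,c) * U $$ (c,b)) = - (\<Sum>c<t. border_mat F x \<alpha> $$ (a,c) * y $ c)"
        unfolding bt by (simp add: U_def sum_negf[symmetric])
      have "(\<Sum>c<t. border_mat F x \<alpha> $$ (a,c) * y $ c) = (if a < t then x $ a else x \<bullet> y)"
      proof (cases "a < t")
        case True
        have "(F *\<^sub>v y) $ a = (\<Sum>c<t. F $$ (a,c) * y $ c)"
          using True F y by (simp add: scalar_prod_def row_def atLeast0LessThan)
        thus ?thesis using True F x by (simp add: border_mat_index)
      next
        case False
        thus ?thesis using F xc y a by (simp add: border_mat_index scalar_prod_def atLeast0LessThan)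
      qed
      thus ?thesis unfolding col using bt F a by (auto simp: border_mat_index U_def)
    qed
    finally show ?thesis .
  qed
  have "leading_submat K = F"
    by (rule eq_matI, insert F K, auto simp: leading_submat_def Kent border_mat_index)
  hence "det K = (\<alpha> - x \<bullet> y) * det F" using det_last_col_zero[OF K] by (simp add: Kent)
  moreover have "det K = det (border_mat F x \<alpha>)"
    unfolding K_def using det_mult[OF border_mat_carrier[OF F] U] detU by simp
  ultimately show ?thesis by (simp add: mult.commute)
qed

lemma det_border_mat_diff:
  fixes F :: "'a::comm_ring_1 mat"
  assumes "F \<in> carrier_mat t t" and "y \<in> carrier_vec t" and "F *\<^sub>v y = x"
  shows "det (border_mat F x \<alpha>) - det (border_mat F x \<beta>) = (\<alpha> - \<beta>) * det F"
  unfolding det_border_mat[OF assms] by (simp add: algebra_simps)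

lemma scalar_prod_mult_vec_sym:
  fixes A :: "'a::comm_ring_1 mat"
  assumes A: "A \<in> carrier_mat t t" and s: "A\<^sup>T = A" and a: "a \<in> carrier_vec t" and b: "b \<in> carrier_vec t"
  shows "(A *\<^sub>v a) \<bullet> b = a \<bullet> (A *\<^sub>v b)"
  using transpose_vec_mult_scalar[OF A b a] s by simp

lemma quad_form_border_mat:
  fixes F :: "real mat"
  assumes F: "F \<in> carrier_mat t t" and x: "x \<in> carrier_vec t" and z: "z \<in> carrier_vec t"
  shows "vec_snoc z \<tau> \<bullet> (border_mat F x \<alpha> *\<^sub>v vec_snoc z \<tau>) =
    z \<bullet> (F *\<^sub>v z) + 2 * \<tau> * (x \<bullet> z) + \<alpha> * \<tau> * \<tau>"
proof -
  have Fz: "F *\<^sub>v z \<in> carrier_vec t" using F z by simp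
  have tx: "\<tau> \<cdot>\<^sub>v x \<in> carrier_vec t" using x by simp
  have "vec_snoc z \<tau> \<bullet> (border_mat F x \<alpha> *\<^sub>v vec_snoc z \<tau>) = z \<bullet> (F *\<^sub>v z + \<tau> \<cdot>\<^sub>v x) + \<tau> * (x \<bullet> z + \<alpha> * \<tau>)"
    unfolding border_mat_mult_vec_snoc[OF F x z] using scalar_prod_vec_snoc[OF z add_carrier_vec[OF Fz tx]] .
  also have "z \<bullet> (F *\<^sub>v z + \<tau> \<cdot>\<^sub>v x) = z \<bullet> (F *\<^sub>v z) + \<tau> * (x \<bullet> z)"
    using scalar_prod_add_distrib[OF z Fz tx] scalar_prod_smult_distrib[OF z x] comm_scalar_prod[OF x z]
    by simp
  finally show ?thesis by (simp add: algebra_simps)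
qed

lemma quad_form_border_mat_complete_square:
  fixes F :: "real mat"
  assumes F: "F \<in> carrier_mat t t" and sym: "F\<^sup>T = F" and y: "y \<in> carrier_vec t" and x: "F *\<^sub>v y = x"
    and z: "z \<in> carrier_vec t"
  shows "vec_snoc z \<tau> \<bullet> (border_mat F x \<alpha> *\<^sub>v vec_snoc z \<tau>) =
    (z + \<tau> \<cdot>\<^sub>v y) \<bullet> (F *\<^sub>v (z + \<tau> \<cdot>\<^sub>v y)) + \<tau> * \<tau> * (\<alpha> - x \<bullet> y)"
proof -
  have xc: "x \<in> carrier_vec t" using x F y mult_mat_vec_carrier by blast
  have ty: "\<tau> \<cdot>\<^sub>v y \<in> carrier_vec t" using y by simp
  have Fz: "F *\<^sub>v z \<in> carrier_vec t" using F z by simp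
  have tx: "\<tau> \<cdot>\<^sub>v x \<in> carrier_vec t" using xc by simp
  have "F *\<^sub>v (z + \<tau> \<cdot>\<^sub>v y) = F *\<^sub>v z + \<tau> \<cdot>\<^sub>v x"
    using mult_add_distrib_mat_vec[OF F z ty] mult_mat_vec[OF F y] x by simp
  moreover have "(z + \<tau> \<cdot>\<^sub>v y) \<bullet> (F *\<^sub>v z + \<tau> \<cdot>\<^sub>v x) =
      z \<bullet> (F *\<^sub>v z + \<tau> \<cdot>\<^sub>v x) + (\<tau> \<cdot>\<^sub>v y) \<bullet> (F *\<^sub>v z + \<tau> \<cdot>\<^sub>v x)"
    by (rule add_scalar_prod_distrib[OF z ty add_carrier_vec[OF Fz tx]])
  moreover have "z \<bullet> (F *\<^sub>v z + \<tau> \<cdot>\<^sub>v x) = z \<bullet> (F *\<^sub>v z) + \<tau> * (x \<bullet> z)"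
    using scalar_prod_add_distrib[OF z Fz tx] scalar_prod_smult_distrib[OF z xc] comm_scalar_prod[OF z xc]
    by simp
  moreover have "(\<tau> \<cdot>\<^sub>v y) \<bullet> (F *\<^sub>v z + \<tau> \<cdot>\<^sub>v x) = \<tau> * (x \<bullet> z) + \<tau> * \<tau> * (x \<bullet> y)"
    using scalar_prod_add_distrib[OF ty Fz tx] smult_scalar_prod_distrib[OF y Fz]
      smult_scalar_prod_distrib[OF y tx] scalar_prod_smult_distrib[OF y xc]
      scalar_prod_mult_vec_sym[OF F sym y z] x comm_scalar_prod[OF y xc] by simp
  ultimately show ?thesis unfolding quad_form_border_mat[OF F xc z] by (simp add: algebra_simps)
qed

lemma det_border_mat_twice:
  fixes G :: "real mat"
  assumes G: "G \<in> carrier_mat k k" and T: "G\<^sup>T = G"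
    and hu: "hu \<in> carrier_vec k" and Gu: "G *\<^sub>v hu = u"
    and hw: "hw \<in> carrier_vec k" and Gw: "G *\<^sub>v hw = w"
    and p: "p = \<alpha> - u \<bullet> hu" and pnz: "p \<noteq> 0"
  shows "det (border_mat (border_mat G u \<alpha>) (vec_snoc w \<gamma>) \<beta>) =
    det G * (p * (\<beta> - w \<bullet> hw) - (\<gamma> - u \<bullet> hw)^2)"
proof -
  have uc: "u \<in> carrier_vec k" using Gu G hu mult_mat_vec_carrier by blast
  have wc: "w \<in> carrier_vec k" using Gw G hw mult_mat_vec_carrier by blast
  define c where "c = u \<bullet> hw"
  define b where "b = w \<bullet> hw"
  \<comment> \<open>The bordered system for (w, \<gamma>) is solved by (hw - l hu, l).\<close>
  define l where "l = (\<gamma> - c) / p"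
  define F where "F = border_mat G u \<alpha>"
  have Fc: "F \<in> carrier_mat (Suc k) (Suc k)" unfolding F_def using G by simp
  define h where "h = hw + (-l) \<cdot>\<^sub>v hu"
  have hc: "h \<in> carrier_vec k" unfolding h_def using hu hw by simp
  have lhu: "(-l) \<cdot>\<^sub>v hu \<in> carrier_vec k" using hu by simp
  have Gh: "G *\<^sub>v h = w + (-l) \<cdot>\<^sub>v u"
    unfolding h_def using mult_add_distrib_mat_vec[OF G hw lhu] mult_mat_vec[OF G hu] Gu Gw by simp
  have wlu: "w + (-l) \<cdot>\<^sub>v u + l \<cdot>\<^sub>v u = w" by (intro eq_vecI, insert wc uc, auto)
  have wu: "w \<bullet> hu = c"
    using scalar_prod_mult_vec_sym[OF G T hw hu] Gu Gw comm_scalar_prod[OF hw uc] by (simp add: c_def)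
  have uh: "u \<bullet> h = c - l * (u \<bullet> hu)"
    unfolding h_def c_def using scalar_prod_add_distrib[OF uc hw lhu] scalar_prod_smult_distrib[OF uc hu] by simp
  have wh: "w \<bullet> h = b - l * c"
    unfolding h_def b_def using scalar_prod_add_distrib[OF wc hw lhu] scalar_prod_smult_distrib[OF wc hu] wu by simp
  have cl: "c + l * p = \<gamma>" unfolding l_def using pnz by simp
  have Fy: "F *\<^sub>v vec_snoc h l = vec_snoc w \<gamma>"
    unfolding F_def border_mat_mult_vec_snoc[OF G uc hc] Gh wlu uh
    using cl p by (simp add: algebra_simps)
  have "det (border_mat F (vec_snoc w \<gamma>) \<beta>) = det F * (\<beta> - vec_snoc w \<gamma> \<bullet> vec_snoc h l)"
    by (rule det_border_mat[OF Fc _ Fy], use hc in simp)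
  also have "vec_snoc w \<gamma> \<bullet> vec_snoc h l = b - l * c + \<gamma> * l"
    unfolding scalar_prod_vec_snoc[OF wc hc] wh ..
  also have "det F = det G * p" unfolding F_def p by (rule det_border_mat[OF G hu Gu])
  also have "det G * p * (\<beta> - (b - l * c + \<gamma> * l)) = det G * (p * (\<beta> - b) - (\<gamma> - c)^2)"
    unfolding l_def using pnz by (simp add: field_simps power2_eq_square)
  finally show ?thesis unfolding F_def b_def c_def .
qed

section \<open>Positive definite real matrices\<close>

definition pos_def_mat :: "nat \<Rightarrow> real mat \<Rightarrow> bool" where
  "pos_def_mat t A \<longleftrightarrow> A \<in> carrier_mat t t \<and> A\<^sup>T = A \<and>
     (\<forall>x. x \<in> carrier_vec t \<and> x \<noteq> 0\<^sub>v t \<longrightarrow> x \<bullet> (A *\<^sub>v x) > 0)"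

lemma pos_def_mat_sym: "pos_def_mat t A \<Longrightarrow> a < t \<Longrightarrow> b < t \<Longrightarrow> A $$ (a,b) = A $$ (b,a)"
  unfolding pos_def_mat_def by (metis carrier_matD(1) carrier_matD(2) index_transpose_mat(1))

lemma pos_def_mat_nonneg: "pos_def_mat t A \<Longrightarrow> w \<in> carrier_vec t \<Longrightarrow> w \<bullet> (A *\<^sub>v w) \<ge> 0"
  unfolding pos_def_mat_def by (cases "w = 0\<^sub>v t", auto simp: less_imp_le)

lemma pos_def_mat_leading_submat:
  assumes A: "pos_def_mat (Suc t) A"
  shows "pos_def_mat t (leading_submat A)"
proof -
  have Ac: "A \<in> carrier_mat (Suc t) (Suc t)" using A unfolding pos_def_mat_def by simp
  have dec: "A = border_mat (leading_submat A) (last_col A) (A $$ (t,t))"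
    by (rule border_mat_leading_submat[OF Ac, symmetric], rule pos_def_mat_sym[OF A])
  have L: "leading_submat A \<in> carrier_mat t t" using Ac by simp
  have T: "(leading_submat A)\<^sup>T = leading_submat A"
    by (rule eq_matI, insert Ac, auto simp: leading_submat_def intro: pos_def_mat_sym[OF A])
  have "z \<bullet> (leading_submat A *\<^sub>v z) > 0" if z: "z \<in> carrier_vec t" "z \<noteq> 0\<^sub>v t" for z
  proof -
    have "vec_snoc z 0 \<bullet> (A *\<^sub>v vec_snoc z 0) > 0"
      using A z vec_snoc_eq_zero_iff[OF z(1)] unfolding pos_def_mat_def by simp
    also have "vec_snoc z 0 \<bullet> (A *\<^sub>v vec_snoc z 0) = z \<bullet> (leading_submat A *\<^sub>v z)"
      by (subst dec, subst quad_form_border_mat[OF L last_col_carrier[OF Ac] z(1)], simp)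
    finally show ?thesis .
  qed
  thus ?thesis unfolding pos_def_mat_def using L T by blast
qed

lemma pos_def_mat_solvable:
  assumes F: "pos_def_mat t F" and x: "x \<in> carrier_vec t"
  obtains y where "y \<in> carrier_vec t" and "F *\<^sub>v y = x"
proof -
  have Fc: "F \<in> carrier_mat t t" using F unfolding pos_def_mat_def by simp
  have d: "det F \<noteq> 0"
  proof
    assume "det F = 0"
    then obtain v where v: "v \<in> carrier_vec t" "v \<noteq> 0\<^sub>v t" "F *\<^sub>v v = 0\<^sub>v t"
      using det_0_iff_vec_prod_zero_field[OF Fc] by blast
    hence "v \<bullet> (F *\<^sub>v v) > 0" using F unfolding pos_def_mat_def by blast
    thus False using v scalar_prod_right_zero[OF v(1)] by simp
  qed
  define y where "y = (1 / det F) \<cdot>\<^sub>v (adj_mat F *\<^sub>v x)"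
  have adjc: "adj_mat F \<in> carrier_mat t t" using adj_mat(1)[OF Fc] .
  have ax: "adj_mat F *\<^sub>v x \<in> carrier_vec t" using adjc x by simp
  have "F *\<^sub>v y = (1 / det F) \<cdot>\<^sub>v ((F * adj_mat F) *\<^sub>v x)"
    unfolding y_def using mult_mat_vec[OF Fc ax] Fc adjc x by simp
  also have "(F * adj_mat F) *\<^sub>v x = det F \<cdot>\<^sub>v x"
    unfolding adj_mat(2)[OF Fc] by (intro eq_vecI, insert x, auto)
  also have "(1 / det F) \<cdot>\<^sub>v (det F \<cdot>\<^sub>v x) = x" using d by (simp add: smult_smult_assoc)
  finally show ?thesis using that[of y] ax unfolding y_def by simp
qed

lemma pos_def_border_mat:
  assumes F: "pos_def_mat t F" and y: "y \<in> carrier_vec t" and Fy: "F *\<^sub>v y = x"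
    and pos: "\<alpha> - x \<bullet> y > 0"
  shows "pos_def_mat (Suc t) (border_mat F x \<alpha>)"
proof -
  have Fc: "F \<in> carrier_mat t t" and T: "F\<^sup>T = F" using F unfolding pos_def_mat_def by auto
  have "v \<bullet> (border_mat F x \<alpha> *\<^sub>v v) > 0" if v: "v \<in> carrier_vec (Suc t)" "v \<noteq> 0\<^sub>v (Suc t)" for v
  proof -
    define z where "z = vec t (\<lambda>a. v $ a)"
    define \<tau> where "\<tau> = v $ t"
    have z: "z \<in> carrier_vec t" unfolding z_def by simp
    have vd: "v = vec_snoc z \<tau>" unfolding z_def \<tau>_def by (rule vec_snoc_split[OF v(1)])
    have q: "v \<bullet> (border_mat F x \<alpha> *\<^sub>v v) =
        (z + \<tau> \<cdot>\<^sub>v y) \<bullet> (F *\<^sub>v (z + \<tau> \<cdot>\<^sub>v y)) + \<tau> * \<tau> * (\<alpha> - x \<bullet> y)"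
      unfolding vd by (rule quad_form_border_mat_complete_square[OF Fc T y Fy z])
    show ?thesis
    proof (cases "\<tau> = 0")
      case True
      have "z + 0 \<cdot>\<^sub>v y = z" by (intro eq_vecI, insert z y, auto)
      moreover have "z \<noteq> 0\<^sub>v t" using True v(2) vd vec_snoc_eq_zero_iff[OF z] by simp
      ultimately show ?thesis unfolding q using True F z unfolding pos_def_mat_def by simp
    next
      case False
      hence "\<tau> * \<tau> > 0" by (simp add: not_square_less_zero less_le)
      hence "\<tau> * \<tau> * (\<alpha> - x \<bullet> y) > 0" using pos by simp
      moreover have "(z + \<tau> \<cdot>\<^sub>v y) \<bullet> (F *\<^sub>v (z + \<tau> \<cdot>\<^sub>v y)) \<ge> 0"
        by (rule pos_def_mat_nonneg[OF F], use z y in simp)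
      ultimately show ?thesis unfolding q by simp
    qed
  qed
  thus ?thesis
    unfolding pos_def_mat_def using border_mat_carrier[OF Fc] transpose_border_mat[OF Fc T] by blast
qed

lemma pos_def_border_mat_iff:
  assumes F: "pos_def_mat t F" and y: "y \<in> carrier_vec t" and Fy: "F *\<^sub>v y = x"
  shows "pos_def_mat (Suc t) (border_mat F x \<alpha>) \<longleftrightarrow> \<alpha> - x \<bullet> y > 0"
proof
  assume E: "pos_def_mat (Suc t) (border_mat F x \<alpha>)"
  have Fc: "F \<in> carrier_mat t t" and T: "F\<^sup>T = F" using F unfolding pos_def_mat_def by auto
  \<comment> \<open>At the vector (-y, 1) the quadratic form equals the Schur complement.\<close>
  have my: "(-1) \<cdot>\<^sub>v y \<in> carrier_vec t" using y by simp
  have my_zero: "(-1) \<cdot>\<^sub>v y + 1 \<cdot>\<^sub>v y = 0\<^sub>v t" by (intro eq_vecI, insert y, auto)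
  have "vec_snoc ((-1) \<cdot>\<^sub>v y) 1 \<bullet> (border_mat F x \<alpha> *\<^sub>v vec_snoc ((-1) \<cdot>\<^sub>v y) 1) > 0"
    using E my vec_snoc_eq_zero_iff[OF my] unfolding pos_def_mat_def by simp
  thus "\<alpha> - x \<bullet> y > 0"
    unfolding quad_form_border_mat_complete_square[OF Fc T y Fy my] my_zero using Fc by simp
qed (rule pos_def_border_mat[OF F y Fy])

lemma pos_def_mat_det_pos: "pos_def_mat t F \<Longrightarrow> det F > 0"
proof (induction t arbitrary: F)
  case 0
  thus ?case unfolding pos_def_mat_def by simp
next
  case (Suc t)
  have Fc: "F \<in> carrier_mat (Suc t) (Suc t)" using Suc.prems unfolding pos_def_mat_def by simp
  have dec: "F = border_mat (leading_submat F) (last_col F) (F $$ (t,t))"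
    by (rule border_mat_leading_submat[OF Fc, symmetric], rule pos_def_mat_sym[OF Suc.prems])
  have L: "pos_def_mat t (leading_submat F)" by (rule pos_def_mat_leading_submat[OF Suc.prems])
  obtain y where y: "y \<in> carrier_vec t" "leading_submat F *\<^sub>v y = last_col F"
    using pos_def_mat_solvable[OF L last_col_carrier[OF Fc]] by blast
  have "det F = det (leading_submat F) * (F $$ (t,t) - last_col F \<bullet> y)"
    by (subst dec, rule det_border_mat[OF leading_submat_carrier[OF Fc] y])
  moreover have "F $$ (t,t) - last_col F \<bullet> y > 0"
    using pos_def_border_mat_iff[OF L y] Suc.prems dec by metis
  ultimately show ?case using Suc.IH[OF L] by simp
qed

lemma pos_def_border_mat_of_det_pos:
  assumes F: "pos_def_mat t F" and x: "x \<in> carrier_vec t" and d: "det (border_mat F x \<alpha>) > 0"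
  shows "pos_def_mat (Suc t) (border_mat F x \<alpha>)"
proof -
  have Fc: "F \<in> carrier_mat t t" using F unfolding pos_def_mat_def by auto
  obtain y where y: "y \<in> carrier_vec t" "F *\<^sub>v y = x" using pos_def_mat_solvable[OF F x] by blast
  have "det (border_mat F x \<alpha>) = det F * (\<alpha> - x \<bullet> y)" by (rule det_border_mat[OF Fc y])
  hence "\<alpha> - x \<bullet> y > 0" using d pos_def_mat_det_pos[OF F] by (simp add: zero_less_mult_iff)
  thus ?thesis by (rule pos_def_border_mat[OF F y(1,2)])
qed

lemma scalar_prod_solution_diff_pos:
  assumes G: "pos_def_mat k G"
    and hu: "hu \<in> carrier_vec k" "G *\<^sub>v hu = u" and hw: "hw \<in> carrier_vec k" "G *\<^sub>v hw = w"
    and uw: "u \<noteq> w"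
  shows "2 * (u \<bullet> hw) < u \<bullet> hu + w \<bullet> hw"
proof -
  have Gc: "G \<in> carrier_mat k k" and T: "G\<^sup>T = G" using G unfolding pos_def_mat_def by auto
  have uc: "u \<in> carrier_vec k" and wc: "w \<in> carrier_vec k" using hu hw Gc by auto
  define y where "y = hw - hu"
  have yc: "y \<in> carrier_vec k" unfolding y_def using hu hw by simp
  have Gy: "G *\<^sub>v y = w - u" unfolding y_def using mult_minus_distrib_mat_vec[OF Gc hw(1) hu(1)] hu hw by simp
  have "y \<noteq> 0\<^sub>v k"
  proof
    assume y0: "y = 0\<^sub>v k"
    have "hw = hu"
    proof (rule eq_vecI)
      fix i assume "i < dim_vec hu"
      thus "hw $ i = hu $ i" using arg_cong[OF y0, of "\<lambda>v. v $ i"] hu hw unfolding y_def by simp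
    qed (use hu hw in simp)
    thus False using uw hu hw by simp
  qed
  hence "y \<bullet> (G *\<^sub>v y) > 0" using G yc unfolding pos_def_mat_def by blast
  also have "y \<bullet> (G *\<^sub>v y) = u \<bullet> hu + w \<bullet> hw - 2 * (u \<bullet> hw)"
  proof -
    have "w \<bullet> hu = u \<bullet> hw"
      using scalar_prod_mult_vec_sym[OF Gc T hw(1) hu(1)] hu hw comm_scalar_prod[OF hw(1) uc] by simp
    moreover have "y \<bullet> (G *\<^sub>v y) = hw \<bullet> w - hw \<bullet> u - (hu \<bullet> w - hu \<bullet> u)"
      using Gy unfolding y_def
      using minus_scalar_prod_distrib[OF hw(1) hu(1) minus_carrier_vec[OF wc uc]]
        scalar_prod_minus_distrib[OF hw(1) wc uc] scalar_prod_minus_distrib[OF hu(1) wc uc] by simp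
    ultimately show ?thesis using hu hw uc wc by (simp add: comm_scalar_prod[of _ k])
  qed
  finally show ?thesis by simp
qed

section \<open>Determinant inequalities for doubly bordered matrices\<close>

lemma det_border_mat_duplicate_gt:
  fixes G :: "real mat"
  assumes G: "pos_def_mat k G" and u: "u \<in> carrier_vec k" and N: "N > 3"
    and gap: "det (border_mat G u N) > (N - 3) * det G"
  shows "det (border_mat (border_mat G u N) (vec_snoc u 3) N) > (N - 3) * det (border_mat G u N)"
proof -
  have Gc: "G \<in> carrier_mat k k" and T: "G\<^sup>T = G" using G unfolding pos_def_mat_def by auto
  obtain h where h: "h \<in> carrier_vec k" "G *\<^sub>v h = u" using pos_def_mat_solvable[OF G u] by blast
  define p where "p = N - u \<bullet> h"
  have dG: "det G > 0" by (rule pos_def_mat_det_pos[OF G])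
  have dF: "det (border_mat G u N) = det G * p" unfolding p_def by (rule det_border_mat[OF Gc h])
  have p: "p > N - 3" using gap dG unfolding dF by (simp add: mult.commute)
  have "det (border_mat (border_mat G u N) (vec_snoc u 3) N) = det G * (p * p - (p - (N - 3))^2)"
    using det_border_mat_twice[OF Gc T h h p_def, of 3 N] p N unfolding p_def by simp
  also have "\<dots> = (N - 3) * det (border_mat G u N) + det G * ((N - 3) * (p - (N - 3)))"
    unfolding dF by (simp add: algebra_simps power2_eq_square)
  finally show ?thesis using p N dG by simp
qed

lemma det_border_mat_pos_of_twice:
  fixes G :: "real mat"
  assumes G: "pos_def_mat k G" and u: "u \<in> carrier_vec k" and w: "w \<in> carrier_vec k"
    and du: "det (border_mat G u N) > 0" and D: "det (border_mat (border_mat G u N) (vec_snoc w \<gamma>) N) > 0"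
  shows "det (border_mat G w N) > 0"
proof -
  have Gc: "G \<in> carrier_mat k k" and T: "G\<^sup>T = G" using G unfolding pos_def_mat_def by auto
  obtain hu where hu: "hu \<in> carrier_vec k" "G *\<^sub>v hu = u" using pos_def_mat_solvable[OF G u] by blast
  obtain hw where hw: "hw \<in> carrier_vec k" "G *\<^sub>v hw = w" using pos_def_mat_solvable[OF G w] by blast
  define p where "p = N - u \<bullet> hu"
  define q where "q = N - w \<bullet> hw"
  have dG: "det G > 0" by (rule pos_def_mat_det_pos[OF G])
  have "det (border_mat G u N) = det G * p" unfolding p_def by (rule det_border_mat[OF Gc hu])
  hence p: "p > 0" using du dG by (simp add: zero_less_mult_iff)
  have "det G * (p * q - (\<gamma> - u \<bullet> hw)^2) > 0"
    using D det_border_mat_twice[OF Gc T hu hw p_def] p unfolding q_def by simp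
  hence "p * q > 0" using dG by (smt (verit) zero_le_power2 zero_less_mult_iff)
  hence "q > 0" using p by (simp add: zero_less_mult_iff)
  moreover have "det (border_mat G w N) = det G * q" unfolding q_def by (rule det_border_mat[OF Gc hw])
  ultimately show ?thesis using dG by simp
qed

lemma det_border_mat_twice_lt_average:
  fixes G :: "real mat"
  assumes G: "pos_def_mat k G" and u: "u \<in> carrier_vec k" and w: "w \<in> carrier_vec k" and uw: "u \<noteq> w"
    and du: "det (border_mat G u N) > 0" and dw: "det (border_mat G w N) > 0"
    and gap: "det (border_mat (border_mat G u N) (vec_snoc w 3) N) > (N - 3) * det (border_mat G w N)"
  shows "2 * det (border_mat (border_mat G u N) (vec_snoc w 3) N) <
    det (border_mat (border_mat G u N) (vec_snoc u 3) N) + det (border_mat (border_mat G w N) (vec_snoc w 3) N)"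
proof -
  have Gc: "G \<in> carrier_mat k k" and T: "G\<^sup>T = G" using G unfolding pos_def_mat_def by auto
  obtain hu where hu: "hu \<in> carrier_vec k" "G *\<^sub>v hu = u" using pos_def_mat_solvable[OF G u] by blast
  obtain hw where hw: "hw \<in> carrier_vec k" "G *\<^sub>v hw = w" using pos_def_mat_solvable[OF G w] by blast
  define a where "a = u \<bullet> hu"
  define b where "b = w \<bullet> hw"
  define c where "c = u \<bullet> hw"
  define p where "p = N - a"
  define q where "q = N - b"
  define s where "s = N - 3"
  have dG: "det G > 0" by (rule pos_def_mat_det_pos[OF G])
  have "det (border_mat G u N) = det G * p" unfolding p_def a_def by (rule det_border_mat[OF Gc hu])
  hence p: "p > 0" using du dG by (simp add: zero_less_mult_iff)
  have dwq: "det (border_mat G w N) = det G * q" unfolding q_def b_def by (rule det_border_mat[OF Gc hw])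
  hence q: "q > 0" using dw dG by (simp add: zero_less_mult_iff)
  have Duw: "det (border_mat (border_mat G u N) (vec_snoc w 3) N) = det G * (p * q - (3 - c)^2)"
    using det_border_mat_twice[OF Gc T hu hw p_def[unfolded a_def]] p unfolding q_def b_def c_def by simp
  have Duu: "det (border_mat (border_mat G u N) (vec_snoc u 3) N) = det G * (p * p - (3 - a)^2)"
    using det_border_mat_twice[OF Gc T hu hu p_def[unfolded a_def]] p unfolding p_def a_def by simp
  have Dww: "det (border_mat (border_mat G w N) (vec_snoc w 3) N) = det G * (q * q - (3 - b)^2)"
    using det_border_mat_twice[OF Gc T hw hw q_def[unfolded b_def]] q unfolding q_def b_def by simp
  \<comment> \<open>The gap hypothesis amounts to p > N - 3.\<close>
  have "det G * (s * q) < det G * (p * q - (3 - c)^2)"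
    using gap unfolding Duw dwq s_def by (simp add: mult.left_commute)
  hence "s * q < p * q - (3 - c)^2" using dG by simp
  hence "s * q < p * q" using zero_le_power2[of "3 - c"] by linarith
  hence ps: "p > s" using q by simp
  have cross: "a + b - 2 * c > 0"
    using scalar_prod_solution_diff_pos[OF G hu hw uw] unfolding a_def b_def c_def by simp
  have "2 * (p * q - (3 - c)^2) - (p * p - (3 - a)^2) - (q * q - (3 - b)^2) =
      - 2 * ((p - s) * (a + b - 2 * c) + (c - a)^2)"
    unfolding p_def q_def s_def by (simp add: algebra_simps power2_eq_square)
  also have "\<dots> < 0"
  proof -
    have "(p - s) * (a + b - 2 * c) + (c - a)^2 > 0" using ps cross by (intro add_pos_nonneg) simp_all
    thus ?thesis by simp
  qed
  finally have neg: "2 * (p * q - (3 - c)^2) - (p * p - (3 - a)^2) - (q * q - (3 - b)^2) < 0" .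
  have "2 * det (border_mat (border_mat G u N) (vec_snoc w 3) N) -
      (det (border_mat (border_mat G u N) (vec_snoc u 3) N) + det (border_mat (border_mat G w N) (vec_snoc w 3) N))
      = det G * (2 * (p * q - (3 - c)^2) - (p * p - (3 - a)^2) - (q * q - (3 - b)^2))"
    unfolding Duw Duu Dww by (simp add: algebra_simps)
  also have "\<dots> < 0" using dG neg by (rule mult_pos_neg)
  finally show ?thesis by simp
qed

section \<open>The classes of integer matrices\<close>

abbreviation real_mat :: "int mat \<Rightarrow> real mat" where
  "real_mat A \<equiv> map_mat real_of_int A"

abbreviation real_vec :: "int vec \<Rightarrow> real vec" where
  "real_vec v \<equiv> map_vec real_of_int v"

lemma det_real_mat: "det (real_mat A) = real_of_int (det A)"
  by (rule of_int_hom.hom_det)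

lemma real_mat_border_mat:
  "F \<in> carrier_mat t t \<Longrightarrow> x \<in> carrier_vec t \<Longrightarrow>
    real_mat (border_mat F x \<alpha>) = border_mat (real_mat F) (real_vec x) (real_of_int \<alpha>)"
  by (rule eq_matI, auto simp: border_mat_index)

lemma real_vec_snoc: "real_vec (vec_snoc z \<tau>) = vec_snoc (real_vec z) (real_of_int \<tau>)"
  by (rule eq_vecI, auto simp: vec_snoc_def)

lemma real_mat_leading_submat:
  "A \<in> carrier_mat (Suc t) (Suc t) \<Longrightarrow> real_mat (leading_submat A) = leading_submat (real_mat A)"
  by (rule eq_matI, auto simp: leading_submat_def)

lemma pos_def_int_iff: "pos_def_int t C \<longleftrightarrow> pos_def_mat t (real_mat C)"
proof -
  have "C\<^sup>T = C \<longleftrightarrow> (real_mat C)\<^sup>T = real_mat C"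
    by (metis map_mat_transpose of_int_hom.mat_hom_inj)
  thus ?thesis unfolding pos_def_int_def pos_def_mat_def by auto
qed

lemma frakC_carrier: "M \<in> frakC n r \<Longrightarrow> M \<in> carrier_mat r r"
  unfolding frakC_def pos_def_int_def by auto

lemma frakE_carrier: "E \<in> frakE n M t \<Longrightarrow> E \<in> carrier_mat t t"
  unfolding frakE_def frakC_def pos_def_int_def by auto

lemma frakE_pos_def: "E \<in> frakE n M t \<Longrightarrow> pos_def_mat t (real_mat E)"
  unfolding frakE_def frakC_def pos_def_int_iff by auto

lemma frakE_diag: "E \<in> frakE n M t \<Longrightarrow> a < t \<Longrightarrow> E $$ (a,a) = n"
  unfolding frakE_def frakC_def by auto

lemma frakE_mod: "E \<in> frakE n M t \<Longrightarrow> a < t \<Longrightarrow> b < t \<Longrightarrow> E $$ (a,b) mod 4 = n mod 4"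
  unfolding frakE_def frakC_def by auto

lemma frakE_index_M: "E \<in> frakE n M t \<Longrightarrow> a < dim_row M \<Longrightarrow> b < dim_row M \<Longrightarrow> E $$ (a,b) = M $$ (a,b)"
  unfolding frakE_def by auto

lemma frakE_sym:
  assumes E: "E \<in> frakE n M t" and "a < t" "b < t"
  shows "E $$ (a,b) = E $$ (b,a)"
proof -
  have "real_of_int (E $$ (a,b)) = real_of_int (E $$ (b,a))"
    using pos_def_mat_sym[OF frakE_pos_def[OF E] assms(2,3)] frakE_carrier[OF E] assms(2,3) by simp
  thus ?thesis by simp
qed

lemma frakE_self:
  assumes M: "M \<in> frakC n r"
  shows "frakE n M r = {M}"
proof -
  have "E = M" if E: "E \<in> frakE n M r" for E
    by (rule eq_matI, insert frakE_carrier[OF E] frakC_carrier[OF M] frakE_index_M[OF E], auto)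
  moreover have "M \<in> frakE n M r" using M unfolding frakE_def by auto
  ultimately show ?thesis by blast
qed

lemma border_mat_leading_submat_frakE:
  assumes E: "E \<in> frakE n M (Suc t)"
  shows "border_mat (leading_submat E) (last_col E) n = E"
  using border_mat_leading_submat[OF frakE_carrier[OF E] frakE_sym[OF E]] frakE_diag[OF E, of t] by simp

lemma leading_submat_in_frakE:
  assumes E: "E \<in> frakE n M (Suc t)" and r: "dim_row M \<le> t"
  shows "leading_submat E \<in> frakE n M t"
proof -
  have Ec: "E \<in> carrier_mat (Suc t) (Suc t)" by (rule frakE_carrier[OF E])
  have "pos_def_mat t (real_mat (leading_submat E))"
    unfolding real_mat_leading_submat[OF Ec] by (rule pos_def_mat_leading_submat[OF frakE_pos_def[OF E]])
  thus ?thesis using Ec r frakE_diag[OF E] frakE_mod[OF E] frakE_index_M[OF E]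
    unfolding frakE_def frakC_def pos_def_int_iff by (auto simp: leading_submat_index)
qed

lemma border_mat_in_frakE:
  assumes F: "F \<in> frakE n M t" and r: "dim_row M \<le> t"
    and x: "x \<in> carrier_vec t" and xm: "\<And>a. a < t \<Longrightarrow> x $ a mod 4 = n mod 4"
    and d: "det (border_mat F x n) > 0"
  shows "border_mat F x n \<in> frakE n M (Suc t)"
proof -
  have Fc: "F \<in> carrier_mat t t" by (rule frakE_carrier[OF F])
  have "det (border_mat (real_mat F) (real_vec x) (real_of_int n)) > 0"
    using d det_real_mat[of "border_mat F x n"] unfolding real_mat_border_mat[OF Fc x] by simp
  hence "pos_def_mat (Suc t) (real_mat (border_mat F x n))"
    unfolding real_mat_border_mat[OF Fc x]
    by (intro pos_def_border_mat_of_det_pos[OF frakE_pos_def[OF F]]) (use x in simp_all)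
  thus ?thesis using Fc r x xm frakE_diag[OF F] frakE_mod[OF F] frakE_index_M[OF F]
    unfolding frakE_def frakC_def pos_def_int_iff by (auto simp: border_mat_index less_Suc_eq)
qed

lemma frakE_abs_le:
  assumes n: "n \<ge> 0" and E: "E \<in> frakE n M t" and a: "a < t" and b: "b < t"
  shows "\<bar>E $$ (a,b)\<bar> \<le> n"
proof (cases "a = b")
  case True
  thus ?thesis using frakE_diag[OF E a] n by simp
next
  case False
  \<comment> \<open>Evaluate the quadratic form at the unit vectors e_a \<plusminus> e_b.\<close>
  have P: "pos_def_mat t (real_mat E)" by (rule frakE_pos_def[OF E])
  have Ec: "E \<in> carrier_mat t t" by (rule frakE_carrier[OF E])
  have "2 * real_of_int n + 2 * \<sigma> * real_of_int (E $$ (a,b)) > 0" if \<sigma>: "\<sigma> = 1 \<or> \<sigma> = -1" for \<sigma> :: real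
  proof -
    define x where "x = unit_vec t a + \<sigma> \<cdot>\<^sub>v unit_vec t b"
    have xc: "x \<in> carrier_vec t" unfolding x_def by simp
    have "x $ a = 1" unfolding x_def using a b False by simp
    hence "x \<noteq> 0\<^sub>v t" using a by auto
    hence "x \<bullet> (real_mat E *\<^sub>v x) > 0" using P xc unfolding pos_def_mat_def by blast
    also have "x \<bullet> (real_mat E *\<^sub>v x) = (real_mat E *\<^sub>v x) $ a + \<sigma> * (real_mat E *\<^sub>v x) $ b"
      unfolding x_def using Ec a b
      by (simp add: add_scalar_prod_distrib[of _ t] scalar_prod_left_unit smult_scalar_prod_distrib)
    also have "\<dots> = real_of_int (E $$ (a,a)) + \<sigma> * E $$ (a,b) + \<sigma> * (E $$ (b,a) + \<sigma> * E $$ (b,b))"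
      unfolding x_def using a b Ec
      by (simp add: mult_add_distrib_mat_vec[of _ t t] mult_mat_vec[of _ t t])
    also have "\<dots> = 2 * real_of_int n + 2 * \<sigma> * real_of_int (E $$ (a,b))"
      using frakE_diag[OF E] frakE_sym[OF E b a] a b \<sigma> by (auto simp: algebra_simps)
    finally show ?thesis .
  qed
  from this[of 1] this[of "-1"] show ?thesis by linarith
qed

lemma finite_frakE: assumes "n \<ge> 0" shows "finite (frakE n M t)"
proof -
  let ?I = "{..<t} \<times> {..<t}"
  have "frakE n M t \<subseteq> (\<lambda>f. mat t t f) ` (PiE ?I (\<lambda>_. {-n..n}))"
  proof
    fix E assume E: "E \<in> frakE n M t"
    have "E = mat t t (restrict (\<lambda>p. E $$ p) ?I)"
      by (rule eq_matI, insert frakE_carrier[OF E], auto)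
    moreover have "restrict (\<lambda>p. E $$ p) ?I \<in> PiE ?I (\<lambda>_. {-n..n})"
      using frakE_abs_le[OF assms E] by (force simp: abs_le_iff)
    ultimately show "E \<in> (\<lambda>f. mat t t f) ` (PiE ?I (\<lambda>_. {-n..n}))" by blast
  qed
  moreover have "finite (PiE ?I (\<lambda>_. {-n..n}))" by (intro finite_PiE, auto)
  ultimately show ?thesis by (meson finite_imageI finite_subset)
qed

definition max_det :: "int \<Rightarrow> int mat \<Rightarrow> nat \<Rightarrow> int" where
  "max_det n M t = Max (det ` frakE n M t)"

lemma det_le_max_det:
  assumes "n \<ge> 0" and "E \<in> frakE n M t"
  shows "det E \<le> max_det n M t"
  unfolding max_det_def by (rule Max_ge[OF finite_imageI[OF finite_frakE[OF assms(1)]] imageI[OF assms(2)]])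

lemma max_det_attained:
  assumes "n \<ge> 0" and "E \<in> frakE n M t"
  obtains F where "F \<in> frakE n M t" and "det F = max_det n M t"
proof -
  have "max_det n M t \<in> det ` frakE n M t"
    unfolding max_det_def using finite_frakE[OF assms(1)] assms(2) by (intro Max_in) auto
  thus ?thesis using that by (auto elim: imageE)
qed

section \<open>Growth of the maximal determinant\<close>

definition duplicate_last :: "int \<Rightarrow> int mat \<Rightarrow> int mat" where
  "duplicate_last n F = border_mat F (vec_snoc (last_col F) 3) n"

lemma duplicate_last_in_frakE:
  assumes n4: "n mod 4 = 3" and F: "F \<in> frakE n M (Suc k)" and r: "dim_row M \<le> Suc k"
    and d: "det (duplicate_last n F) > 0"
  shows "duplicate_last n F \<in> frakE n M (Suc (Suc k))"
  unfolding duplicate_last_def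
proof (rule border_mat_in_frakE[OF F r])
  have Fc: "F \<in> carrier_mat (Suc k) (Suc k)" by (rule frakE_carrier[OF F])
  show "vec_snoc (last_col F) 3 \<in> carrier_vec (Suc k)" using Fc by simp
  have dl: "dim_vec (last_col F) = k" using Fc by (simp add: last_col_def)
  fix a assume "a < Suc k"
  thus "vec_snoc (last_col F) 3 $ a mod 4 = n mod 4"
    using frakE_mod[OF F, of a k] n4 by (auto simp: vec_snoc_index dl last_col_index[OF Fc] less_Suc_eq)
qed (use d duplicate_last_def in simp)

lemma real_mat_duplicate_last_border_mat:
  assumes "G \<in> carrier_mat k k" and "u \<in> carrier_vec k"
  shows "real_mat (duplicate_last n (border_mat G u n)) =
    border_mat (border_mat (real_mat G) (real_vec u) n) (vec_snoc (real_vec u) 3) n"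
  unfolding duplicate_last_def last_col_border_mat[OF assms]
    real_mat_border_mat[OF border_mat_carrier[OF assms(1)] vec_snoc_carrier[OF assms(2)]]
  by (simp add: real_mat_border_mat[OF assms] real_vec_snoc)

lemma det_duplicate_last_gt:
  assumes n4: "n mod 4 = 3" and n3: "n > 3" and F: "F \<in> frakE n M (Suc k)" and r: "dim_row M \<le> Suc k"
    and gap: "det F > (n - 3) * det (leading_submat F)"
  shows "duplicate_last n F \<in> frakE n M (Suc (Suc k))" and "det (duplicate_last n F) > (n - 3) * det F"
proof -
  define G where "G = leading_submat F"
  define u where "u = last_col F"
  have Fc: "F \<in> carrier_mat (Suc k) (Suc k)" by (rule frakE_carrier[OF F])
  have Gc: "G \<in> carrier_mat k k" and uc: "u \<in> carrier_vec k" unfolding G_def u_def using Fc by auto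
  have Fd: "border_mat G u n = F" unfolding G_def u_def by (rule border_mat_leading_submat_frakE[OF F])
  have PG: "pos_def_mat k (real_mat G)"
    unfolding G_def real_mat_leading_submat[OF Fc] by (rule pos_def_mat_leading_submat[OF frakE_pos_def[OF F]])
  have "real_of_int (det F) > (real_of_int n - 3) * real_of_int (det G)"
    using gap unfolding G_def by (metis of_int_less_iff of_int_mult of_int_diff of_int_numeral)
  hence "det (border_mat (real_mat G) (real_vec u) n) > (real_of_int n - 3) * det (real_mat G)"
    unfolding det_real_mat Fd[symmetric] real_mat_border_mat[OF Gc uc, symmetric] by simp
  from det_border_mat_duplicate_gt[OF PG _ _ this]
  have "real_of_int (det (duplicate_last n F)) > (real_of_int n - 3) * real_of_int (det F)"
    using uc n3 unfolding det_real_mat[symmetric] Fd[symmetric]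
      real_mat_duplicate_last_border_mat[OF Gc uc] real_mat_border_mat[OF Gc uc] by simp
  thus gt: "det (duplicate_last n F) > (n - 3) * det F"
    by (metis of_int_less_iff of_int_mult of_int_diff of_int_numeral)
  have "det F > 0" using pos_def_mat_det_pos[OF frakE_pos_def[OF F]] unfolding det_real_mat by simp
  hence "det (duplicate_last n F) > 0" using gt n3 by (smt (verit) mult_pos_pos)
  thus "duplicate_last n F \<in> frakE n M (Suc (Suc k))" by (rule duplicate_last_in_frakE[OF n4 F r])
qed

lemma tilde_border_mat:
  "G \<in> carrier_mat k k \<Longrightarrow> u \<in> carrier_vec k \<Longrightarrow> tilde (border_mat G u \<alpha>) = border_mat G u 3"
  by (rule eq_matI, auto simp: tilde_def border_mat_index)

lemma det_gt_of_det_tilde_pos: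
  assumes M: "M \<in> frakC n (Suc k)" and td: "det (tilde M) > 0"
  shows "det M > (n - 3) * det (leading_submat M)"
proof -
  have ME: "M \<in> frakE n M (Suc k)" using M unfolding frakE_def by auto
  have Mc: "M \<in> carrier_mat (Suc k) (Suc k)" by (rule frakE_carrier[OF ME])
  define G where "G = leading_submat M"
  define u where "u = last_col M"
  have Gc: "G \<in> carrier_mat k k" and uc: "u \<in> carrier_vec k" unfolding G_def u_def using Mc by auto
  have Md: "border_mat G u n = M" unfolding G_def u_def by (rule border_mat_leading_submat_frakE[OF ME])
  have PG: "pos_def_mat k (real_mat G)"
    unfolding G_def real_mat_leading_submat[OF Mc] by (rule pos_def_mat_leading_submat[OF frakE_pos_def[OF ME]])
  have "real_vec u \<in> carrier_vec k" using uc by simp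
  then obtain y where y: "y \<in> carrier_vec k" "real_mat G *\<^sub>v y = real_vec u"
    using pos_def_mat_solvable[OF PG] by blast
  have "det (border_mat (real_mat G) (real_vec u) n) - det (border_mat (real_mat G) (real_vec u) 3) =
      (real_of_int n - 3) * det (real_mat G)"
    by (rule det_border_mat_diff[OF _ y], use Gc in simp)
  hence "real_of_int (det M) - real_of_int (det (tilde M)) = (real_of_int n - 3) * real_of_int (det G)"
    unfolding det_real_mat[symmetric] Md[symmetric] tilde_border_mat[OF Gc uc] real_mat_border_mat[OF Gc uc]
    by simp
  hence "real_of_int (det M - det (tilde M)) = real_of_int ((n - 3) * det G)" by simp
  hence "det M - det (tilde M) = (n - 3) * det G" by (simp only: of_int_eq_iff)
  thus ?thesis using td unfolding G_def by simp
qed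

lemma maximizer_det_gap:
  assumes n4: "n mod 4 = 3" and n3: "n > 3" and M: "M \<in> frakC n r" and r1: "1 \<le> r"
    and td: "det (tilde M) > 0" and t: "r \<le> t"
  shows "\<exists>F \<in> frakE n M t. det F = max_det n M t \<and> det F > (n - 3) * det (leading_submat F)"
  using t
proof (induction t rule: nat_induct_at_least)
  case base
  have "det M > (n - 3) * det (leading_submat M)"
    using det_gt_of_det_tilde_pos[of M n "r - 1"] M r1 td by simp
  moreover have "max_det n M r = det M" unfolding max_det_def frakE_self[OF M] by simp
  ultimately show ?case using frakE_self[OF M] by simp
next
  case (Suc t)
  have n0: "n \<ge> 0" using n3 by simp
  have dM: "dim_row M \<le> t" using frakC_carrier[OF M] Suc.hyps by simp
  obtain F where F: "F \<in> frakE n M t" "det F = max_det n M t" "det F > (n - 3) * det (leading_submat F)"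
    using Suc.IH by blast
  obtain k where k: "t = Suc k" using Suc.hyps r1 by (cases t) auto
  have D: "duplicate_last n F \<in> frakE n M (Suc t)" "det (duplicate_last n F) > (n - 3) * det F"
    using det_duplicate_last_gt[OF n4 n3 F(1)[unfolded k] dM[unfolded k] F(3)] k by simp_all
  obtain F' where F': "F' \<in> frakE n M (Suc t)" "det F' = max_det n M (Suc t)"
    using max_det_attained[OF n0 D(1)] by blast
  have "det (leading_submat F') \<le> det F"
    using det_le_max_det[OF n0 leading_submat_in_frakE[OF F'(1) dM]] F(2) by simp
  hence "(n - 3) * det (leading_submat F') \<le> (n - 3) * det F" using n3 by (intro mult_left_mono) auto
  moreover have "det (duplicate_last n F) \<le> det F'" using F'(2) det_le_max_det[OF n0 D(1)] by simp
  ultimately have "det F' > (n - 3) * det (leading_submat F')" using D(2) by linarith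
  thus ?case using F' by blast
qed

lemma max_det_growth:
  assumes n4: "n mod 4 = 3" and n3: "n > 3" and M: "M \<in> frakC n r" and r1: "1 \<le> r"
    and td: "det (tilde M) > 0" and t: "r \<le> t"
  shows "(n - 3) * max_det n M t < max_det n M (Suc t)"
proof -
  obtain F where F: "F \<in> frakE n M t" "det F = max_det n M t" "det F > (n - 3) * det (leading_submat F)"
    using maximizer_det_gap[OF assms] by blast
  obtain k where k: "t = Suc k" using t r1 by (cases t) auto
  have dM: "dim_row M \<le> t" using frakC_carrier[OF M] t by simp
  have D: "duplicate_last n F \<in> frakE n M (Suc t)" "det (duplicate_last n F) > (n - 3) * det F"
    using det_duplicate_last_gt[OF n4 n3 F(1)[unfolded k] dM[unfolded k] F(3)] k by simp_all
  have "det (duplicate_last n F) \<le> max_det n M (Suc t)" by (rule det_le_max_det, use n3 in simp, rule D(1))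
  thus ?thesis using D(2) F(2) by simp
qed

section \<open>Maximizers with an entry 3 in the last two columns\<close>

lemma maximizer_det_gt:
  assumes n4: "n mod 4 = 3" and n3: "n > 3" and M: "M \<in> frakC n r" and r1: "1 \<le> r"
    and td: "det (tilde M) > 0"
    and E: "E \<in> frakE n M (Suc t)" and max: "\<forall>E' \<in> frakE n M (Suc t). det E' \<le> det E"
    and X: "X \<in> frakE n M t" and rt: "r \<le> t"
  shows "det E > (n - 3) * det X"
proof -
  have n0: "n \<ge> 0" using n3 by simp
  have "det E = max_det n M (Suc t)"
    using det_le_max_det[OF n0 E] max max_det_attained[OF n0 E] by (metis order_antisym)
  moreover have "(n - 3) * max_det n M t < max_det n M (Suc t)"
    by (rule max_det_growth[OF n4 n3 M r1 td rt])
  moreover have "(n - 3) * det X \<le> (n - 3) * max_det n M t"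
    using det_le_max_det[OF n0 X] n3 by (intro mult_left_mono) auto
  ultimately show ?thesis by linarith
qed

lemma det_duplicate_last_le_max:
  assumes n4: "n mod 4 = 3" and n3: "n > 3"
    and E: "E \<in> frakE n M (Suc (Suc k))" and max: "\<forall>E' \<in> frakE n M (Suc (Suc k)). det E' \<le> det E"
    and X: "X \<in> frakE n M (Suc k)" and r: "dim_row M \<le> Suc k"
  shows "det (duplicate_last n X) \<le> det E"
proof (rule ccontr)
  assume "\<not> det (duplicate_last n X) \<le> det E"
  moreover have "det E > 0" using pos_def_mat_det_pos[OF frakE_pos_def[OF E]] unfolding det_real_mat by simp
  ultimately have "duplicate_last n X \<in> frakE n M (Suc (Suc k))"
    by (intro duplicate_last_in_frakE[OF n4 X r]) simp
  thus False using max \<open>\<not> det (duplicate_last n X) \<le> det E\<close> by blast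
qed

lemma frakE_eq_border_mat_twice:
  assumes E: "E \<in> frakE n M (Suc (Suc k))" and r: "dim_row M \<le> Suc k" and e3: "E $$ (k, Suc k) = 3"
  shows "border_mat (border_mat (leading_submat (leading_submat E)) (last_col (leading_submat E)) n)
      (vec_snoc (vec k (\<lambda>a. E $$ (a, Suc k))) 3) n = E"
proof -
  have Ec: "E \<in> carrier_mat (Suc (Suc k)) (Suc (Suc k))" by (rule frakE_carrier[OF E])
  have "last_col E = vec_snoc (vec k (\<lambda>a. last_col E $ a)) (last_col E $ k)"
    by (rule vec_snoc_split[OF last_col_carrier[OF Ec]])
  also have "vec k (\<lambda>a. last_col E $ a) = vec k (\<lambda>a. E $$ (a, Suc k))"
    by (rule eq_vecI) (simp_all add: last_col_index[OF Ec])
  finally have "last_col E = vec_snoc (vec k (\<lambda>a. E $$ (a, Suc k))) 3"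
    using last_col_index[OF Ec, of k] e3 by simp
  thus ?thesis
    using border_mat_leading_submat_frakE[OF E] border_mat_leading_submat_frakE[OF leading_submat_in_frakE[OF E r]]
    by simp
qed

lemma maximizer_border_mat_twice_eq:
  assumes n4: "n mod 4 = 3" and n3: "n > 3" and M: "M \<in> frakC n r" and r1: "1 \<le> r"
    and td: "det (tilde M) > 0"
    and G: "G \<in> frakE n M k" and rk: "r \<le> k" and uc: "u \<in> carrier_vec k" and wc: "w \<in> carrier_vec k"
    and E: "border_mat (border_mat G u n) (vec_snoc w 3) n \<in> frakE n M (Suc (Suc k))"
    and max: "\<forall>E' \<in> frakE n M (Suc (Suc k)). det E' \<le> det (border_mat (border_mat G u n) (vec_snoc w 3) n)"
  shows "u = w"
proof (rule ccontr)
  assume "u \<noteq> w"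
  hence uw: "real_vec u \<noteq> real_vec w" using of_int_hom.vec_hom_inj by metis
  define F where "F = border_mat G u n"
  define Ei where "Ei = border_mat G w n"
  have dM: "dim_row M \<le> k" using frakC_carrier[OF M] rk by simp
  have Gc: "G \<in> carrier_mat k k" by (rule frakE_carrier[OF G])
  have Fc: "F \<in> carrier_mat (Suc k) (Suc k)" unfolding F_def using Gc by simp
  have F: "F \<in> frakE n M (Suc k)"
    using leading_submat_in_frakE[OF E] dM Fc unfolding F_def[symmetric] by simp
  have PG: "pos_def_mat k (real_mat G)" by (rule frakE_pos_def[OF G])
  have ruc: "real_vec u \<in> carrier_vec k" and rwc: "real_vec w \<in> carrier_vec k" using uc wc by auto
  have RF: "real_mat F = border_mat (real_mat G) (real_vec u) n"
    unfolding F_def by (rule real_mat_border_mat[OF Gc uc])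
  have RE: "real_mat (border_mat F (vec_snoc w 3) n) =
      border_mat (border_mat (real_mat G) (real_vec u) n) (vec_snoc (real_vec w) 3) n"
    unfolding real_mat_border_mat[OF Fc vec_snoc_carrier[OF wc]] RF real_vec_snoc by simp
  have REi: "real_mat Ei = border_mat (real_mat G) (real_vec w) n"
    unfolding Ei_def by (rule real_mat_border_mat[OF Gc wc])
  have dF: "det (border_mat (real_mat G) (real_vec u) n) > 0"
    using pos_def_mat_det_pos[OF frakE_pos_def[OF F]] unfolding RF .
  have dE: "det (border_mat (border_mat (real_mat G) (real_vec u) n) (vec_snoc (real_vec w) 3) n) > 0"
    using pos_def_mat_det_pos[OF frakE_pos_def[OF E]] unfolding F_def[symmetric] RE .
  have dEi: "det (border_mat (real_mat G) (real_vec w) n) > 0"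
    by (rule det_border_mat_pos_of_twice[OF PG ruc rwc dF dE])
  have Ei: "Ei \<in> frakE n M (Suc k)" unfolding Ei_def
  proof (rule border_mat_in_frakE[OF G dM wc])
    show "w $ a mod 4 = n mod 4" if "a < k" for a
      using that frakE_mod[OF E, of a "Suc k"] Gc wc by (simp add: border_mat_index vec_snoc_index)
    show "det (border_mat G w n) > 0" using dEi unfolding REi[symmetric] Ei_def det_real_mat by simp
  qed
  have "det (border_mat F (vec_snoc w 3) n) > (n - 3) * det Ei"
    by (rule maximizer_det_gt[OF n4 n3 M r1 td E[folded F_def] max[folded F_def] Ei], use rk in simp)
  hence "(real_of_int n - 3) * det (border_mat (real_mat G) (real_vec w) n) <
      det (border_mat (border_mat (real_mat G) (real_vec u) n) (vec_snoc (real_vec w) 3) n)"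
    unfolding RE[symmetric] REi[symmetric] det_real_mat
    by (metis of_int_less_iff of_int_mult of_int_diff of_int_numeral)
  from det_border_mat_twice_lt_average[OF PG ruc rwc uw dF dEi this]
  have "2 * det (real_mat (border_mat F (vec_snoc w 3) n)) <
      det (real_mat (duplicate_last n F)) + det (real_mat (duplicate_last n Ei))"
    unfolding RE unfolding F_def Ei_def
      real_mat_duplicate_last_border_mat[OF Gc uc] real_mat_duplicate_last_border_mat[OF Gc wc] .
  hence "2 * det (border_mat F (vec_snoc w 3) n) < det (duplicate_last n F) + det (duplicate_last n Ei)"
    unfolding det_real_mat by linarith
  moreover have "det (duplicate_last n F) \<le> det (border_mat F (vec_snoc w 3) n)"
    "det (duplicate_last n Ei) \<le> det (border_mat F (vec_snoc w 3) n)"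
    using det_duplicate_last_le_max[OF n4 n3 E[folded F_def] max[folded F_def]] F Ei dM by simp_all
  ultimately show False by linarith
qed

lemma maximizer_last_cols_eq:
  assumes n4: "n mod 4 = 3" and n3: "n > 3" and M: "M \<in> frakC n r" and r1: "1 \<le> r"
    and td: "det (tilde M) > 0"
    and E: "E \<in> frakE n M (Suc (Suc k))" and max: "\<forall>E' \<in> frakE n M (Suc (Suc k)). det E' \<le> det E"
    and rk: "r \<le> k" and e3: "E $$ (k, Suc k) = 3"
  shows "\<forall>a<k. E $$ (a,k) = E $$ (a, Suc k)"
proof -
  have dM: "dim_row M \<le> Suc k" using frakC_carrier[OF M] rk by simp
  have Ec: "E \<in> carrier_mat (Suc (Suc k)) (Suc (Suc k))" by (rule frakE_carrier[OF E])
  define G where "G = leading_submat (leading_submat E)"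
  define u where "u = last_col (leading_submat E)"
  define w where "w = vec k (\<lambda>a. E $$ (a, Suc k))"
  have "dim_row M \<le> k" using frakC_carrier[OF M] rk by simp
  hence G: "G \<in> frakE n M k" unfolding G_def by (rule leading_submat_in_frakE[OF leading_submat_in_frakE[OF E dM]])
  have Ed: "border_mat (border_mat G u n) (vec_snoc w 3) n = E"
    unfolding G_def u_def w_def by (rule frakE_eq_border_mat_twice[OF E dM e3])
  have "u = w"
    by (rule maximizer_border_mat_twice_eq[OF n4 n3 M r1 td G rk], unfold Ed)
      (use Ec E max in \<open>simp_all add: u_def w_def\<close>)
  moreover have "u $ a = E $$ (a,k)" if "a < k" for a
    using that unfolding u_def
    by (simp add: last_col_index[OF leading_submat_carrier[OF Ec]] leading_submat_index[OF Ec])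
  ultimately show ?thesis by (simp add: w_def)
qed

section \<open>Simultaneous permutation of rows and columns\<close>

definition permute_mat :: "(nat \<Rightarrow> nat) \<Rightarrow> nat \<Rightarrow> 'a mat \<Rightarrow> 'a mat" where
  "permute_mat \<pi> m A = mat m m (\<lambda>(a,b). A $$ (\<pi> a, \<pi> b))"

lemma permute_mat_carrier[simp]: "permute_mat \<pi> m A \<in> carrier_mat m m"
  by (simp add: permute_mat_def)

lemma permute_mat_index: "a < m \<Longrightarrow> b < m \<Longrightarrow> permute_mat \<pi> m A $$ (a,b) = A $$ (\<pi> a, \<pi> b)"
  by (simp add: permute_mat_def)

lemma real_mat_permute_mat:
  "\<pi> permutes {0..<m} \<Longrightarrow> A \<in> carrier_mat m m \<Longrightarrow> real_mat (permute_mat \<pi> m A) = permute_mat \<pi> m (real_mat A)"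
  by (rule eq_matI, auto simp: permute_mat_def permutes_in_image)

lemma det_permute_mat:
  fixes A :: "'a::comm_ring_1 mat"
  assumes A: "A \<in> carrier_mat m m" and p: "\<pi> permutes {0..<m}"
  shows "det (permute_mat \<pi> m A) = det A"
proof -
  define R where "R = mat m m (\<lambda>(a,b). A $$ (\<pi> a, b))"
  have Rc: "R \<in> carrier_mat m m" unfolding R_def by simp
  have "(permute_mat \<pi> m A)\<^sup>T = mat m m (\<lambda>(a,b). R\<^sup>T $$ (\<pi> a, b))"
    by (rule eq_matI, insert p, auto simp: permute_mat_def R_def permutes_in_image)
  hence "det ((permute_mat \<pi> m A)\<^sup>T) = of_int (sign \<pi>) * det (R\<^sup>T)"
    using det_permute_rows[OF _ p, of "R\<^sup>T"] Rc by simp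
  also have "det (R\<^sup>T) = det R" by (rule det_transpose[OF Rc])
  also have "det R = of_int (sign \<pi>) * det A" unfolding R_def by (rule det_permute_rows[OF A p])
  also have "of_int (sign \<pi>) * (of_int (sign \<pi>) * det A) = det A"
    by (metis mult.assoc mult_1 of_int_1 of_int_mult sign_idempotent)
  finally show ?thesis using det_transpose[OF permute_mat_carrier[of \<pi> m A]] by simp
qed

lemma pos_def_permute_mat:
  assumes A: "pos_def_mat m A" and p: "\<pi> permutes {0..<m}"
  shows "pos_def_mat m (permute_mat \<pi> m A)"
proof -
  have Ac: "A \<in> carrier_mat m m" using A unfolding pos_def_mat_def by simp
  have pm: "\<And>a. a < m \<Longrightarrow> \<pi> a < m" using p by (simp add: permutes_in_image)
  have ip: "\<And>a. inv_into UNIV \<pi> (\<pi> a) = a" using permutes_inverses(2)[OF p] .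
  have T: "(permute_mat \<pi> m A)\<^sup>T = permute_mat \<pi> m A"
    by (rule eq_matI, auto simp: permute_mat_def intro!: pos_def_mat_sym[OF A] pm)
  have "x \<bullet> (permute_mat \<pi> m A *\<^sub>v x) > 0" if x: "x \<in> carrier_vec m" "x \<noteq> 0\<^sub>v m" for x
  proof -
    \<comment> \<open>The quadratic form of the permuted matrix at x is that of A at x permuted by the inverse.\<close>
    define x' where "x' = vec m (\<lambda>c. x $ (inv_into UNIV \<pi> c))"
    have x'c: "x' \<in> carrier_vec m" unfolding x'_def by simp
    have "x' \<noteq> 0\<^sub>v m"
    proof
      assume z: "x' = 0\<^sub>v m"
      have "x = 0\<^sub>v m"
      proof (rule eq_vecI)
        fix i assume "i < dim_vec (0\<^sub>v m :: real vec)"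
        hence i: "i < m" by simp
        thus "x $ i = 0\<^sub>v m $ i" using arg_cong[OF z, of "\<lambda>v. v $ \<pi> i"] pm[OF i] ip by (simp add: x'_def)
      qed (use x in simp)
      thus False using x by simp
    qed
    hence "x' \<bullet> (A *\<^sub>v x') > 0" using A x'c unfolding pos_def_mat_def by blast
    also have "x' \<bullet> (A *\<^sub>v x') =
        (\<Sum>c\<in>{0..<m}. x $ (inv_into UNIV \<pi> c) * (\<Sum>d\<in>{0..<m}. A $$ (c, d) * x $ (inv_into UNIV \<pi> d)))"
      using Ac unfolding x'_def by (auto simp: row_def scalar_prod_def intro!: sum.cong)
    also have "\<dots> = (\<Sum>a\<in>{0..<m}. x $ a * (\<Sum>d\<in>{0..<m}. A $$ (\<pi> a, d) * x $ (inv_into UNIV \<pi> d)))"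
      by (subst sum.permute[OF p], simp add: ip)
    also have "\<dots> = (\<Sum>a\<in>{0..<m}. x $ a * (\<Sum>b\<in>{0..<m}. A $$ (\<pi> a, \<pi> b) * x $ b))"
      by (rule sum.cong, simp, subst sum.permute[OF p], simp add: ip)
    also have "\<dots> = x \<bullet> (permute_mat \<pi> m A *\<^sub>v x)"
      using x unfolding scalar_prod_def
      by (auto simp: permute_mat_def row_def scalar_prod_def intro!: sum.cong)
    finally show ?thesis .
  qed
  thus ?thesis unfolding pos_def_mat_def using T by simp
qed

lemma permute_mat_in_frakE:
  assumes E: "E \<in> frakE n M m" and p: "\<pi> permutes {0..<m}" and \<pi>_id: "\<And>a. a < dim_row M \<Longrightarrow> \<pi> a = a"
    and r: "dim_row M \<le> m"
  shows "permute_mat \<pi> m E \<in> frakE n M m"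
proof -
  have Ec: "E \<in> carrier_mat m m" by (rule frakE_carrier[OF E])
  have pm: "\<And>a. a < m \<Longrightarrow> \<pi> a < m" using p by (simp add: permutes_in_image)
  have "pos_def_mat m (real_mat (permute_mat \<pi> m E))"
    unfolding real_mat_permute_mat[OF p Ec] by (rule pos_def_permute_mat[OF frakE_pos_def[OF E] p])
  thus ?thesis using pm \<pi>_id r frakE_diag[OF E] frakE_mod[OF E] frakE_index_M[OF E]
    unfolding frakE_def frakC_def pos_def_int_iff by (auto simp: permute_mat_index)
qed

lemma permutation_onto_last_two:
  fixes r i j k :: nat
  assumes "r \<le> i" "r \<le> j" "i < Suc (Suc k)" "j < Suc (Suc k)" "i \<noteq> j"
  obtains \<pi> where "\<pi> permutes {0..<Suc (Suc k)}" "\<pi> k = i" "\<pi> (Suc k) = j" "\<And>a. a < r \<Longrightarrow> \<pi> a = a"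
proof -
  define \<sigma>1 where "\<sigma>1 = Transposition.transpose (Suc k) j"
  define \<sigma>2 where "\<sigma>2 = Transposition.transpose k (\<sigma>1 i)"
  have "\<sigma>1 i < Suc (Suc k)" "r \<le> \<sigma>1 i" "\<sigma>1 i \<noteq> Suc k"
    using assms unfolding \<sigma>1_def by (auto simp: Transposition.transpose_def)
  hence "\<sigma>1 \<circ> \<sigma>2 permutes {0..<Suc (Suc k)}"
    using assms unfolding \<sigma>1_def \<sigma>2_def by (intro permutes_compose permutes_swap_id) auto
  moreover have "(\<sigma>1 \<circ> \<sigma>2) k = i" "(\<sigma>1 \<circ> \<sigma>2) (Suc k) = j"
    using assms \<open>\<sigma>1 i \<noteq> Suc k\<close> unfolding \<sigma>1_def \<sigma>2_def by (auto simp: Transposition.transpose_def)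
  moreover have "(\<sigma>1 \<circ> \<sigma>2) a = a" if "a < r" for a
    using that assms \<open>r \<le> \<sigma>1 i\<close> unfolding \<sigma>1_def \<sigma>2_def by (auto simp: Transposition.transpose_def)
  ultimately show ?thesis using that by blast
qed

lemma maximizer_cols_eq:
  assumes n4: "n mod 4 = 3" and n3: "n > 3" and M: "M \<in> frakC n r" and r1: "1 \<le> r"
    and td: "det (tilde M) > 0"
    and E: "E \<in> frakE n M (Suc (Suc k))" and max: "\<forall>E' \<in> frakE n M (Suc (Suc k)). det E' \<le> det E"
    and ij: "r \<le> i" "r \<le> j" "i < Suc (Suc k)" "j < Suc (Suc k)" "i \<noteq> j" and e3: "E $$ (i, j) = 3"
    and a: "a < Suc (Suc k)" "a \<noteq> i" "a \<noteq> j"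
  shows "E $$ (a, i) = E $$ (a, j)"
proof -
  obtain \<pi> where \<pi>: "\<pi> permutes {0..<Suc (Suc k)}" "\<pi> k = i" "\<pi> (Suc k) = j" "\<And>a. a < r \<Longrightarrow> \<pi> a = a"
    using permutation_onto_last_two[OF ij] by blast
  have rk: "r \<le> k" using ij by linarith
  define P where "P = permute_mat \<pi> (Suc (Suc k)) E"
  have P: "P \<in> frakE n M (Suc (Suc k))"
    unfolding P_def by (rule permute_mat_in_frakE[OF E \<pi>(1)], use frakC_carrier[OF M] \<pi>(4) rk in simp_all)
  have "det P = det E" unfolding P_def by (rule det_permute_mat[OF frakE_carrier[OF E] \<pi>(1)])
  hence "\<forall>E' \<in> frakE n M (Suc (Suc k)). det E' \<le> det P" using max by simp
  moreover have "P $$ (k, Suc k) = 3" using \<pi> e3 unfolding P_def by (simp add: permute_mat_index)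
  ultimately have cols: "\<forall>b<k. P $$ (b,k) = P $$ (b, Suc k)"
    by (intro maximizer_last_cols_eq[OF n4 n3 M r1 td P _ rk])
  define b where "b = inv_into UNIV \<pi> a"
  have \<pi>b: "\<pi> b = a" unfolding b_def using permutes_inverses(1)[OF \<pi>(1)] .
  have "b < Suc (Suc k)" using \<pi>(1) a(1) \<pi>b by (metis atLeastLessThan_iff permutes_in_image zero_le)
  moreover have "b \<noteq> k" "b \<noteq> Suc k" using \<pi>b \<pi>(2,3) a by auto
  ultimately have "P $$ (b,k) = P $$ (b, Suc k)" using cols by simp
  thus ?thesis using \<open>b < Suc (Suc k)\<close> \<pi>b \<pi>(2,3) unfolding P_def by (simp add: permute_mat_index)
qed

theorem theorem9:
  fixes n :: int and r m :: nat and M E :: "int mat" and i j :: nat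
  assumes "n mod 4 = 3" and "n > 3"
    and "1 \<le> r" and "r \<le> m"
    and "M \<in> frakC n r"
    and "det (tilde M) > 0"
    and "E \<in> frakE n M m"
    and "\<forall>E' \<in> frakE n M m. det E' \<le> det E"
    and "i < m - r" and "j < m - r" and "i \<noteq> j"
    and "E $$ (r + i, r + j) = 3"
  shows "(\<forall>k<r. E $$ (k, r + i) = E $$ (k, r + j)) \<and>
         (\<forall>k<m - r. k \<noteq> i \<and> k \<noteq> j \<longrightarrow> E $$ (r + k, r + i) = E $$ (r + k, r + j))"
proof -
  define k where "k = m - 2"
  have m: "m = Suc (Suc k)" using assms(9-11) unfolding k_def by linarith
  have cols: "E $$ (a, r + i) = E $$ (a, r + j)" if "a < m" "a \<noteq> r + i" "a \<noteq> r + j" for a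
    by (rule maximizer_cols_eq[OF assms(1,2,5,3,6) assms(7,8)[unfolded m]])
      (use that assms(9-12) m in simp_all)
  show ?thesis
  proof (intro conjI allI impI)
    fix a assume "a < r"
    thus "E $$ (a, r + i) = E $$ (a, r + j)" using cols assms(4) by simp
  next
    fix a assume "a < m - r" "a \<noteq> i \<and> a \<noteq> j"
    thus "E $$ (r + a, r + i) = E $$ (r + a, r + j)" using cols by simp
  qed
qed

end
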